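(* For every word $x\in\{a,b\}^*$ there is a 2-state MCQFA (with complex amplitudes) over $\{a,b\}$ that accepts $x$ with probability $0$ and accepts every word $y\in\{a,b\}^*$ with $y\neq x$ with nonzero probability; i.e. the complement of the singleton language $\{x\}$ is recognized by a 2-state nondeterministic MCQFA.
   Context: A 2-state Moore–Crutchfield quantum finite automaton (MCQFA) over $\{a,b\}$ consists of unitaries $U_a,U_b\in\mathbb{C}^{2\times 2}$, an initial unit vector $|u_0\rangle\in\mathbb{C}^2$ and a set of accepting basis states; on input $w=w_1\cdots w_k$ the final state is $U_{w_k}\cdots U_{w_1}|u_0\rangle$ and the acceptance probability is the sum of the squared moduli of its accepting coordinates. A language $L$ is recognized by a nondeterministic MCQFA if words in $L$ are accepted with nonzero probability and words not in $L$ with probability $0$. *)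

theory Defs
  imports "HOL-Analysis.Analysis"
begin

datatype letter = a | b

definition conj_transpose :: "complex^2^2 \<Rightarrow> complex^2^2" where
  "conj_transpose U = (\<chi> i j. cnj (U $ j $ i))"

definition unitary2 :: "complex^2^2 \<Rightarrow> bool" where
  "unitary2 U \<longleftrightarrow> conj_transpose U ** U = mat 1"

record mcqfa2 =
  trans :: "letter \<Rightarrow> complex^2^2"
  init :: "complex^2"
  acc :: "2 set"

definition wf_mcqfa2 :: "mcqfa2 \<Rightarrow> bool" where
  "wf_mcqfa2 M \<longleftrightarrow> (\<forall>c. unitary2 (trans M c)) \<and> norm (init M) = 1"

definition final_state :: "mcqfa2 \<Rightarrow> letter list \<Rightarrow> complex^2" where
  "final_state M w = fold (\<lambda>c v. trans M c *v v) w (init M)"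

definition accept_prob :: "mcqfa2 \<Rightarrow> letter list \<Rightarrow> real" where
  "accept_prob M w = (\<Sum>i\<in>acc M. (cmod (final_state M w $ i))\<^sup>2)"

definition nd_recognizes :: "mcqfa2 \<Rightarrow> letter list set \<Rightarrow> bool" where
  "nd_recognizes M L \<longleftrightarrow> (\<forall>w. w \<in> L \<longleftrightarrow> accept_prob M w \<noteq> 0)"

end

theory Submission
  imports Defs "HOL-Library.Sublist"
begin

text \<open>
  For a parameter \<open>z\<close>, let \<open>U\<^sub>c(z)\<close> act as the identity on a line \<open>p\<^sub>c\<close> and as multiplication
  by \<open>z\<close> on the orthogonal line \<open>q\<^sub>c\<close>, and let \<open>V\<^sub>c(z)\<close> do the opposite, so that
  \<open>U\<^sub>c(z) V\<^sub>c(z) = z I\<close>. Starting from \<open>u = V\<^bsub>x\<^sub>1\<^esub>(z) \<cdots> V\<^bsub>x\<^sub>k\<^esub>(z) e\<^sub>1\<close>, the run of the automaton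
  with the unitaries \<open>U\<^sub>c(z)\<close>, \<open>|z| = 1\<close>, on \<open>x\<close> ends in \<open>z\<^bsup>|x|\<^esup> e\<^sub>1\<close>, which is never accepted
  by the accepting state \<open>e\<^sub>2\<close>. For \<open>y \<noteq> x\<close>, after cancelling the longest common prefix, the
  accepting amplitude of \<open>y\<close> is \<open>z\<^bsup>|s|\<^esup>\<close> times a polynomial in \<open>z\<close> whose value at \<open>z = 0\<close>,
  where all \<open>U\<^sub>c\<close>, \<open>V\<^sub>c\<close> are rank-one projections, is nonzero. So every \<open>y \<noteq> x\<close> excludes only
  finitely many \<open>z\<close>, and an admissible \<open>z\<close> on the (uncountable) unit circle exists.
\<close>

instance letter :: countable by countable_datatype

definition run :: "('a \<Rightarrow> 'b::semiring_1^'n^'n) \<Rightarrow> 'a list \<Rightarrow> 'b^'n \<Rightarrow> 'b^'n" where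
  "run A w v = fold (\<lambda>c v. A c *v v) w v"

lemma run_Nil [simp]: "run A [] v = v"
  by (simp add: run_def)

lemma run_Cons [simp]: "run A (c # w) v = run A w (A c *v v)"
  by (simp add: run_def)

lemma run_append: "run A (u @ w) v = run A w (run A u v)"
  by (simp add: run_def)

lemma run_snoc: "run A (w @ [c]) v = A c *v run A w v"
  by (simp add: run_append)

lemma run_scale: "run A w (k *s v) = k *s run A w (v :: 'b::field^'n)"
  by (induction w arbitrary: v) (simp_all add: vector_scalar_commute)

lemma run_zero: "run A w (0 :: 'b::field^'n) = 0"
  using run_scale[of A w 0 0] by simp

lemma run_reverse_inverse:
  assumes "\<And>c v. A c *v (B c *v v) = z *s v"
  shows "run A w (run B (rev w) v) = z ^ length w *s (v :: 'b::field^'n)"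
proof (induction w arbitrary: v)
  case (Cons c w)
  have "run A (c # w) (run B (rev (c # w)) v) = run A w (A c *v (B c *v run B (rev w) v))"
    by (simp add: run_snoc)
  also have "\<dots> = z *s run A w (run B (rev w) v)"
    by (simp add: assms run_scale)
  finally show ?case by (simp add: Cons)
qed simp

definition poly_vec :: "('b \<Rightarrow> 'b::comm_ring_1^'n) \<Rightarrow> bool" where
  "poly_vec f \<longleftrightarrow> (\<forall>i. \<exists>p. \<forall>z. f z $ i = poly p z)"

definition poly_mat :: "('b \<Rightarrow> 'b::comm_ring_1^'n^'m) \<Rightarrow> bool" where
  "poly_mat A \<longleftrightarrow> (\<forall>i j. \<exists>p. \<forall>z. A z $ i $ j = poly p z)"

lemma poly_vec_const: "poly_vec (\<lambda>z. v)"
  unfolding poly_vec_def by (metis poly_pCons poly_0 mult_zero_right add_0_right)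

lemma poly_vec_matrix_vector_mult:
  fixes A :: "'b \<Rightarrow> 'b::comm_ring_1^'n::finite^'m"
  assumes "poly_mat A" and "poly_vec f"
  shows "poly_vec (\<lambda>z. A z *v f z)"
  unfolding poly_vec_def
proof
  fix i
  obtain P where P: "\<And>j z. A z $ i $ j = poly (P j) z"
    using assms(1) unfolding poly_mat_def by metis
  obtain Q where Q: "\<And>j z. f z $ j = poly (Q j) z"
    using assms(2) unfolding poly_vec_def by metis
  have "(A z *v f z) $ i = poly (\<Sum>j\<in>UNIV. P j * Q j) z" for z
    by (simp add: matrix_vector_mult_def poly_sum P Q)
  then show "\<exists>p. \<forall>z. (A z *v f z) $ i = poly p z" by blast
qed

lemma poly_vec_run:
  fixes A :: "'b \<Rightarrow> 'a \<Rightarrow> 'b::comm_ring_1^'n::finite^'n"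
  assumes "\<And>c. poly_mat (\<lambda>z. A z c)" and "poly_vec f"
  shows "poly_vec (\<lambda>z. run (A z) w (f z))"
  using assms(2)
  by (induction w arbitrary: f) (simp_all add: assms(1) poly_vec_matrix_vector_mult)

text \<open>\<open>p c\<close>, \<open>q c\<close> are orthogonal eigenvectors of the Pauli matrix \<open>\<sigma>\<^sub>x\<close> (for \<open>a\<close>) resp. \<open>\<sigma>\<^sub>y\<close>
  (for \<open>b\<close>), each of squared norm 2. No vector of one of these bases is orthogonal to a
  vector of the other basis, nor to \<open>e\<^sub>1\<close> or \<open>e\<^sub>2\<close>.\<close>

definition p :: "letter \<Rightarrow> complex^2" where
  "p c = (case c of a \<Rightarrow> vector [1, 1] | b \<Rightarrow> vector [1, \<i>])"

definition q :: "letter \<Rightarrow> complex^2" where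
  "q c = (case c of a \<Rightarrow> vector [1, -1] | b \<Rightarrow> vector [1, -\<i>])"

definition U :: "complex \<Rightarrow> letter \<Rightarrow> complex^2^2" where
  "U z c = (\<chi> i j. (p c $ i * cnj (p c $ j) + z * (q c $ i * cnj (q c $ j))) / 2)"

definition V :: "complex \<Rightarrow> letter \<Rightarrow> complex^2^2" where
  "V z c = (\<chi> i j. (z * (p c $ i * cnj (p c $ j)) + q c $ i * cnj (q c $ j)) / 2)"

definition e1 :: "complex^2" where
  "e1 = vector [1, 0]"

definition hinner :: "complex^2 \<Rightarrow> complex^2 \<Rightarrow> complex" where
  "hinner u v = cnj (u $ 1) * v $ 1 + cnj (u $ 2) * v $ 2"

lemma matrix_vector_mult_2:
  "(A :: 'a::semiring_1^2^2) *v v = vector [A$1$1 * v$1 + A$1$2 * v$2, A$2$1 * v$1 + A$2$2 * v$2]"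
  by (simp add: vec_eq_iff forall_2 matrix_vector_mult_def sum_2)

lemma U_V_mult: "U z c *v (V z c *v v) = z *s v"
  by (cases c) (simp_all add: matrix_vector_mult_2 vec_eq_iff forall_2 U_def V_def p_def q_def
      field_simps)

lemma unitary2_U:
  assumes "cmod z = 1"
  shows "unitary2 (U z c)"
proof -
  have "cnj z * z = 1"
    using assms by (metis complex_norm_square mult.commute of_real_1 power_one)
  then show ?thesis
    by (cases c) (simp_all add: unitary2_def conj_transpose_def vec_eq_iff forall_2
        matrix_matrix_mult_def sum_2 mat_def U_def p_def q_def field_simps)
qed

lemma poly_mat_U: "poly_mat (\<lambda>z. U z c)"
proof -
  have "U z c $ i $ j = poly [:p c $ i * cnj (p c $ j) / 2, q c $ i * cnj (q c $ j) / 2:] z"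
    for i j z by (simp add: U_def add_divide_distrib)
  then show ?thesis unfolding poly_mat_def by blast
qed

lemma poly_mat_V: "poly_mat (\<lambda>z. V z c)"
proof -
  have "V z c $ i $ j = poly [:q c $ i * cnj (q c $ j) / 2, p c $ i * cnj (p c $ j) / 2:] z"
    for i j z by (simp add: V_def add_divide_distrib algebra_simps)
  then show ?thesis unfolding poly_mat_def by blast
qed

lemma U_0_mult: "U 0 c *v v = (hinner (p c) v / 2) *s p c"
  by (cases c) (simp_all add: matrix_vector_mult_2 vec_eq_iff forall_2 hinner_def U_def p_def
      q_def field_simps)

lemma V_0_mult: "V 0 c *v v = (hinner (q c) v / 2) *s q c"
  by (cases c) (simp_all add: matrix_vector_mult_2 vec_eq_iff forall_2 hinner_def V_def p_def
      q_def field_simps)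

lemma hinner_scale: "hinner u (k *s v) = k * hinner u v"
  by (simp add: hinner_def algebra_simps)

lemma hinner_p_p: "hinner (p c) (p d) \<noteq> 0"
  and hinner_q_q: "hinner (q c) (q d) \<noteq> 0"
  and hinner_p_q: "c \<noteq> d \<Longrightarrow> hinner (p c) (q d) \<noteq> 0"
  and hinner_p_e1: "hinner (p c) e1 \<noteq> 0"
  and hinner_q_e1: "hinner (q c) e1 \<noteq> 0"
  by (cases c; cases d; simp add: hinner_def p_def q_def e1_def complex_eq_iff)+

lemma p_nth_2: "p c $ 2 \<noteq> 0"
  and q_nth_2: "q c $ 2 \<noteq> 0"
  by (cases c; simp add: p_def q_def)+

lemma run_V_0:
  assumes "w \<noteq> []"
  shows "\<exists>k. k \<noteq> 0 \<and> run (V 0) (rev w) e1 = k *s q (hd w)"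
  using assms
proof (induction w)
  case (Cons c w)
  show ?case
  proof (cases "w = []")
    case True
    then show ?thesis
      using hinner_q_e1[of c] by (intro exI[of _ "hinner (q c) e1 / 2"]) (simp add: V_0_mult)
  next
    case False
    with Cons.IH obtain k where "k \<noteq> 0" "run (V 0) (rev w) e1 = k *s q (hd w)" by blast
    then show ?thesis
      using hinner_q_q[of c "hd w"]
      by (intro exI[of _ "k * hinner (q c) (q (hd w)) / 2"]) (simp add: run_snoc V_0_mult hinner_scale)
  qed
qed simp

lemma run_U_0:
  assumes "w \<noteq> []" and "hinner (p (hd w)) v \<noteq> 0"
  shows "\<exists>k. k \<noteq> 0 \<and> run (U 0) w v = k *s p (last w)"
  using assms
proof (induction w arbitrary: v)
  case (Cons c w)
  have run_eq: "run (U 0) (c # w) v = (hinner (p c) v / 2) *s run (U 0) w (p c)"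
    by (simp add: U_0_mult run_scale)
  show ?case
  proof (cases "w = []")
    case True
    then show ?thesis
      using Cons.prems run_eq by (intro exI[of _ "hinner (p c) v / 2"]) simp
  next
    case False
    with Cons.IH[OF False hinner_p_p] obtain k where "k \<noteq> 0" "run (U 0) w (p c) = k *s p (last w)"
      by blast
    then show ?thesis
      using Cons.prems run_eq False by (intro exI[of _ "hinner (p c) v / 2 * k"]) simp
  qed
qed simp

lemma accepting_amplitude_at_0:
  assumes "u \<noteq> [] \<or> w \<noteq> []" and "u \<noteq> [] \<Longrightarrow> w \<noteq> [] \<Longrightarrow> hd u \<noteq> hd w"
  shows "run (U 0) u (run (V 0) (rev w) e1) $ 2 \<noteq> 0"
proof (cases "u = []")
  case True
  with assms(1) obtain k where "k \<noteq> 0" "run (V 0) (rev w) e1 = k *s q (hd w)"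
    using run_V_0 by blast
  then show ?thesis using True q_nth_2 by simp
next
  case False
  obtain k v where kv: "k \<noteq> 0" "run (V 0) (rev w) e1 = k *s v" "hinner (p (hd u)) v \<noteq> 0"
  proof (cases "w = []")
    case True
    then show ?thesis using that[of 1 e1] hinner_p_e1 by simp
  next
    case False
    then obtain k where "k \<noteq> 0" "run (V 0) (rev w) e1 = k *s q (hd w)"
      using run_V_0 by blast
    then show ?thesis using that hinner_p_q \<open>u \<noteq> []\<close> False assms(2) by blast
  qed
  moreover obtain k' where "k' \<noteq> 0" "run (U 0) u v = k' *s p (last u)"
    using run_U_0[OF False kv(3)] by blast
  ultimately show ?thesis using p_nth_2 by (simp add: run_scale)
qed

lemma neq_imp_common_prefix_split:
  assumes "u \<noteq> w"
  obtains s u' w' where "u = s @ u'" "w = s @ w'" "u' \<noteq> [] \<or> w' \<noteq> []"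
    "u' \<noteq> [] \<Longrightarrow> w' \<noteq> [] \<Longrightarrow> hd u' \<noteq> hd w'"
proof -
  consider "prefix u w" | "prefix w u" | "u \<parallel> w"
    by (auto simp: parallel_def)
  then show ?thesis
  proof cases
    case 1
    then obtain w' where "w = u @ w'" by (auto elim: prefixE)
    with assms that[of u "[]" w'] show ?thesis by simp
  next
    case 2
    then obtain u' where "u = w @ u'" by (auto elim: prefixE)
    with assms that[of w u' "[]"] show ?thesis by simp
  next
    case 3
    then obtain s c u' d w' where "c \<noteq> d" "u = s @ c # u'" "w = s @ d # w'"
      using parallel_decomp by blast
    with that[of s "c # u'" "d # w'"] show ?thesis by auto
  qed
qed

definition amplitude :: "complex \<Rightarrow> letter list \<Rightarrow> letter list \<Rightarrow> complex" where
  "amplitude z x y = run (U z) y (run (V z) (rev x) e1) $ 2"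

lemma finite_amplitude_zeros:
  assumes "y \<noteq> x"
  shows "finite {z. z \<noteq> 0 \<and> amplitude z x y = 0}"
proof -
  obtain s y' x' where split: "y = s @ y'" "x = s @ x'" "y' \<noteq> [] \<or> x' \<noteq> []"
    "y' \<noteq> [] \<Longrightarrow> x' \<noteq> [] \<Longrightarrow> hd y' \<noteq> hd x'"
    using neq_imp_common_prefix_split[OF assms] by blast
  obtain P where P: "\<And>z. run (U z) y' (run (V z) (rev x') e1) $ 2 = poly P z"
    using poly_vec_run[where A = U, OF poly_mat_U poly_vec_run[where A = V, OF poly_mat_V poly_vec_const]]
    unfolding poly_vec_def by blast
  have "poly P 0 \<noteq> 0"
    using accepting_amplitude_at_0[OF split(3,4)] unfolding P .
  then have "finite {z. poly P z = 0}"
    by (intro poly_roots_finite) auto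
  moreover have amplitude_eq: "amplitude z x y = z ^ length s * poly P z" for z
  proof -
    have "amplitude z x y = run (U z) y' (run (U z) s (run (V z) (rev s) (run (V z) (rev x') e1))) $ 2"
      by (simp add: amplitude_def split run_append)
    also have "\<dots> = z ^ length s * poly P z"
      by (simp add: run_reverse_inverse[OF U_V_mult] run_scale P)
    finally show ?thesis .
  qed
  moreover have "{z. z \<noteq> 0 \<and> amplitude z x y = 0} \<subseteq> {z. poly P z = 0}"
    by (auto simp: amplitude_eq)
  ultimately show ?thesis
    using finite_subset by blast
qed

lemma exists_unimodular_avoiding:
  fixes S :: "'a \<Rightarrow> complex set"
  assumes "countable Y" and "\<And>y. y \<in> Y \<Longrightarrow> finite (S y)"
  shows "\<exists>w. cmod w = 1 \<and> (\<forall>y\<in>Y. w \<notin> S y)"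
proof -
  have "countable (\<Union>y\<in>Y. S y)"
    using assms by (simp add: countable_finite)
  moreover have "uncountable (sphere (0::complex) 1)"
    by (rule connected_uncountable[of _ 1 "-1"]) (auto intro: connected_sphere)
  ultimately obtain w where "w \<in> sphere 0 1" "w \<notin> (\<Union>y\<in>Y. S y)"
    by (metis countable_subset subsetI)
  then show ?thesis by auto
qed

lemma scaleR_eq_of_real_scale: "r *\<^sub>R (v :: complex^'n) = complex_of_real r *s v"
  by (simp add: vec_eq_iff scaleR_conv_of_real[where 'a=complex])

theorem mainTheorem14:
  fixes x :: "letter list"
  shows "\<exists>M. wf_mcqfa2 M \<and> accept_prob M x = 0 \<and> (\<forall>y. y \<noteq> x \<longrightarrow> accept_prob M y \<noteq> 0)"
proof -
  obtain w where w: "cmod w = 1" and good: "\<And>y. y \<noteq> x \<Longrightarrow> amplitude w x y \<noteq> 0"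
    using exists_unimodular_avoiding[of "{y. y \<noteq> x}" "\<lambda>y. {z. z \<noteq> 0 \<and> amplitude z x y = 0}"]
      finite_amplitude_zeros by fastforce
  define u where "u = run (V w) (rev x) e1"
  have run_x: "run (U w) x u = w ^ length x *s e1"
    unfolding u_def by (rule run_reverse_inverse[OF U_V_mult])
  have "u \<noteq> 0"
  proof
    assume "u = 0"
    with run_x have "w ^ length x *s e1 = 0" by (simp add: run_zero)
    with w show False by (simp add: vec_eq_iff forall_2 e1_def)
  qed
  define M where "M = \<lparr>trans = U w, init = (1 / norm u) *\<^sub>R u, acc = {2}\<rparr>"
  have prob: "accept_prob M y = (cmod (run (U w) y u $ 2) / norm u)\<^sup>2" for y
    by (simp add: accept_prob_def final_state_def M_def run_def[symmetric] scaleR_eq_of_real_scale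
        run_scale norm_mult norm_divide)
  have "wf_mcqfa2 M"
    using unitary2_U[OF w] \<open>u \<noteq> 0\<close> by (simp add: wf_mcqfa2_def M_def)
  moreover have "accept_prob M x = 0"
    by (simp add: prob run_x e1_def)
  moreover have "\<forall>y. y \<noteq> x \<longrightarrow> accept_prob M y \<noteq> 0"
    using good \<open>u \<noteq> 0\<close> by (simp add: prob amplitude_def u_def)
  ultimately show ?thesis by blast
qed

end
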